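(* Let $K$ be a field of prime characteristic $p$, $C$ a cyclic $p$-group of order $q>1$, and $\tilde C$ its subgroup of index $p$. Let $A,B\in P_{KC}$. If $\alpha_1(A)=\alpha_1(B)$ and $A\!\downarrow_{\tilde C}=B\!\downarrow_{\tilde C}$, then $A=B$.
   Context: The indecomposable $KC$-modules up to isomorphism are $V_1,\dots,V_q$ with $\dim V_r=r$; $R_{KC}$ is the Green ring with $\mathbb{Z}$-basis $V_1,\dots,V_q$ (addition from direct sum, multiplication from tensor product). $P_{KC}$ is the $\mathbb{Z}$-span of the permutation modules, which has $\mathbb{Z}$-basis $V_1,V_p,V_{p^2},\dots,V_q$. For $A=\sum_i\alpha_i(A)V_i\in R_{KC}$, $\alpha_1(A)$ is the coefficient of $V_1$. $A\mapsto A\!\downarrow_{\tilde C}$ is the ring homomorphism $R_{KC}\to R_{K\tilde C}$ induced by restriction. *)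

theory Defs
  imports "Jordan_Normal_Form.Jordan_Normal_Form_Uniqueness"
begin

(* Elements of the Green ring R_{KC}, C cyclic of order q, are represented by their
   coordinate functions r \<mapsto> \<alpha>_r(A) with respect to the basis V_1,...,V_q
   (coordinates outside {1..q} are zero). *)
definition green_elems :: "nat \<Rightarrow> (nat \<Rightarrow> int) set" where
  "green_elems q = {A. \<forall>r. A r \<noteq> 0 \<longrightarrow> 1 \<le> r \<and> r \<le> q}"

(* P_{KC}: Z-span of V_1, V_p, V_{p^2}, ..., V_q  (q = p^n) *)
definition perm_span :: "nat \<Rightarrow> nat \<Rightarrow> (nat \<Rightarrow> int) set" where
  "perm_span p n = {A \<in> green_elems (p ^ n). \<forall>r. A r \<noteq> 0 \<longrightarrow> (\<exists>i\<le>n. r = p ^ i)}"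

(* The indecomposable KC-module V_r: K^r with a generator g of C acting by the
   unipotent Jordan block of size r. *)
definition V_mat :: "'a itself \<Rightarrow> nat \<Rightarrow> 'a :: field mat" where
  "V_mat _ r = jordan_block r (1::'a)"

(* For a K<h>-module given by the matrix M of the generator h (h unipotent), the number
   of indecomposable summands V_k (Jordan blocks of size k for eigenvalue 1). *)
definition indec_mult :: "'a :: field mat \<Rightarrow> nat \<Rightarrow> int" where
  "indec_mult M k = 2 * int (dim_gen_eigenspace M 1 k)
      - int (dim_gen_eigenspace M 1 (k - 1)) - int (dim_gen_eigenspace M 1 (k + 1))"

(* Restriction R_{KC} \<rightarrow> R_{K\<tilde>C}, \<tilde>C = <g^p> of order p^(n-1): V_r restricts to the
   module on which g^p acts by (J_r)^p; extended Z-linearly. *)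
definition restr :: "'a :: field itself \<Rightarrow> nat \<Rightarrow> nat \<Rightarrow> (nat \<Rightarrow> int) \<Rightarrow> (nat \<Rightarrow> int)" where
  "restr T p n A = (\<lambda>k. if 1 \<le> k \<and> k \<le> p ^ (n - 1)
      then (\<Sum>r\<in>{1..p ^ n}. A r * indec_mult ((V_mat T r) ^\<^sub>m p) k) else 0)"

end

theory Submission imports Defs begin

text \<open>
  In characteristic p the binomial theorem gives (J - 1)^p = J^p - 1 for the unipotent Jordan
  block J of size r, so g^p acts on V_{ps} with generalised 1-eigenspaces of dimension
  min(pk, ps): the restriction of V_{ps} is p V_s, while V_1 restricts to V_1. Hence for D in
  P_{KC} with vanishing V_1-coefficient, the V_{p^i}-coefficient of the restriction of D is
  p times the V_{p^(i+1)}-coefficient of D. Apply this to D = A - B.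
\<close>

lemma pow_mat_add_exp:
  assumes A: "(A :: 'b :: semiring_1 mat) \<in> carrier_mat n n"
  shows "A ^\<^sub>m (a + b) = A ^\<^sub>m a * A ^\<^sub>m b"
proof (induction b)
  case 0
  then show ?case using A by simp
next
  case (Suc b)
  have "A ^\<^sub>m (a + Suc b) = (A ^\<^sub>m a * A ^\<^sub>m b) * A" using Suc by simp
  also have "\<dots> = A ^\<^sub>m a * (A ^\<^sub>m b * A)"
    using A by (intro assoc_mult_mat[of _ n n _ n _ n]) auto
  finally show ?case by simp
qed

lemma pow_mat_mult_exp:
  assumes A: "(A :: 'b :: semiring_1 mat) \<in> carrier_mat n n"
  shows "(A ^\<^sub>m a) ^\<^sub>m k = A ^\<^sub>m (a * k)"
proof (induction k)
  case 0
  then show ?case using A by simp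
next
  case (Suc k)
  then show ?case using pow_mat_add_exp[OF A, of "a * k" a] by (simp add: add.commute)
qed

lemma char_matrix_jordan_block_pow_char:
  assumes "prime p" "CHAR('a :: field) = p"
  shows "char_matrix (jordan_block m (1 :: 'a) ^\<^sub>m p) 1 = jordan_block m (0 :: 'a) ^\<^sub>m p"
proof (rule eq_matI)
  fix i j
  assume ij: "i < dim_row (jordan_block m (0 :: 'a) ^\<^sub>m p)"
    "j < dim_col (jordan_block m (0 :: 'a) ^\<^sub>m p)"
  have p0: "p \<noteq> 0" using assms(1) by auto
  with ij have "i < m" "j < m" by auto
  moreover have "(of_nat (p choose d) :: 'a) = 0" if "0 < d" "d < p" for d
    using dvd_choose_prime[of d p] that assms by (simp add: of_nat_eq_0_iff_char_dvd)
  ultimately show "char_matrix (jordan_block m (1 :: 'a) ^\<^sub>m p) 1 $$ (i, j)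
      = (jordan_block m (0 :: 'a) ^\<^sub>m p) $$ (i, j)"
    unfolding char_matrix_def jordan_block_zero_pow jordan_block_pow
    using p0 by (auto simp: binomial_eq_0 power_0_left)
qed (auto simp: char_matrix_def)

lemma dim_gen_eigenspace_V_mat_pow_char:
  assumes "prime p" "CHAR('a :: field) = p"
  shows "dim_gen_eigenspace (V_mat TYPE('a) m ^\<^sub>m p) 1 k = min (p * k) m"
proof -
  have "dim_gen_eigenspace (V_mat TYPE('a) m ^\<^sub>m p) 1 k
      = kernel_dim ((jordan_block m (0 :: 'a) ^\<^sub>m p) ^\<^sub>m k)"
    unfolding dim_gen_eigenspace_def V_mat_def char_matrix_jordan_block_pow_char[OF assms] ..
  also have "\<dots> = kernel_dim (jordan_block m (0 :: 'a) ^\<^sub>m (p * k))"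
    by (subst pow_mat_mult_exp[of _ m]) auto
  also have "\<dots> = min (p * k) m"
    unfolding kernel_dim_def jordan_block_pow_dim by (rule dim_kernel_zero_jordan_block_pow)
  finally show ?thesis .
qed

lemma indec_mult_V_mat_pow_char:
  assumes "prime p" "CHAR('a :: field) = p" "k \<ge> 1" "s \<ge> 1"
  shows "indec_mult (V_mat TYPE('a) (p * s) ^\<^sub>m p) k = (if k = s then int p else 0)"
proof -
  have min_mult: "min (p * x) (p * s) = p * min x s" for x
    using prime_gt_0_nat[OF assms(1)] by (auto simp: min_def)
  obtain k' where k: "k = Suc k'" using assms(3) by (cases k) auto
  show ?thesis
    unfolding indec_mult_def dim_gen_eigenspace_V_mat_pow_char[OF assms(1,2)] min_mult k
    by (cases "k' < s"; cases "Suc k' = s"; cases "Suc k' < s"; simp add: min_def algebra_simps)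
qed

lemma restr_diff:
  "restr T p n (\<lambda>r. A r - B r) k = restr T p n A k - restr T p n B k"
  unfolding restr_def by (simp add: sum_subtractf left_diff_distrib)

lemma perm_span_diff:
  assumes "A \<in> perm_span p n" "B \<in> perm_span p n"
  shows "(\<lambda>r. A r - B r) \<in> perm_span p n"
proof -
  have "A r \<noteq> 0 \<or> B r \<noteq> 0" if "A r - B r \<noteq> 0" for r
    using that by auto
  then show ?thesis
    using assms unfolding perm_span_def green_elems_def by blast
qed

lemma restr_perm_span_pow:
  fixes D :: "nat \<Rightarrow> int"
  assumes p: "prime p" "CHAR('a :: field) = p"
    and D: "D \<in> perm_span p n" "D 1 = 0" and i: "i < n"
  shows "restr TYPE('a) p n D (p ^ i) = int p * D (p ^ Suc i)"
proof -
  let ?f = "\<lambda>r. D r * indec_mult (V_mat TYPE('a) r ^\<^sub>m p) (p ^ i)"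
  have p1: "p > 1" using p(1) prime_gt_1_nat by blast
  have k: "1 \<le> p ^ i" "p ^ i \<le> p ^ (n - 1)"
    using p1 i by (auto intro: power_increasing)
  have others: "?f r = 0" if r: "r \<in> {1..p ^ n} - {p ^ Suc i}" for r
  proof (cases "D r = 0")
    case False
    then obtain j where "r = p ^ j" using D(1) unfolding perm_span_def by blast
    moreover have "j \<noteq> 0" using False D(2) \<open>r = p ^ j\<close> by (cases j) auto
    ultimately obtain j' where j': "r = p * p ^ j'" "j' \<noteq> i"
      using r by (cases j) auto
    have "p ^ i \<noteq> p ^ j'" using j'(2) p1 by (simp add: power_inject_exp)
    then show ?thesis
      using indec_mult_V_mat_pow_char[OF p k(1), of "p ^ j'"] p1 j'(1) by simp
  qed simp
  have "p ^ Suc i \<in> {1..p ^ n}"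
    using p1 i power_increasing[of "Suc i" n p] by simp
  then have "(\<Sum>r\<in>{1..p ^ n}. ?f r) = ?f (p ^ Suc i) + (\<Sum>r\<in>{1..p ^ n} - {p ^ Suc i}. ?f r)"
    by (rule sum.remove[OF finite_atLeastAtMost])
  then have "restr TYPE('a) p n D (p ^ i) = ?f (p ^ Suc i)"
    unfolding restr_def using k others by simp
  also have "\<dots> = int p * D (p ^ Suc i)"
    using indec_mult_V_mat_pow_char[OF p k(1) k(1)] by simp
  finally show ?thesis .
qed

theorem corollary4p2:
  fixes p n :: nat and A B :: "nat \<Rightarrow> int"
  assumes "prime p" and "CHAR('a::field) = p" and "n \<ge> 1"
    and "A \<in> perm_span p n" and "B \<in> perm_span p n"
    and "A 1 = B 1"
    and "restr TYPE('a) p n A = restr TYPE('a) p n B"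
  shows "A = B"
proof
  fix r
  define D where "D = (\<lambda>r. A r - B r)"
  have D: "D \<in> perm_span p n" "D 1 = 0"
    using perm_span_diff[OF assms(4,5)] assms(6) unfolding D_def by auto
  have restr_D: "restr TYPE('a) p n D k = 0" for k
    unfolding D_def restr_diff using assms(7) by simp
  have "D r = 0"
  proof (rule ccontr)
    assume "D r \<noteq> 0"
    then obtain j where j: "j \<le> n" "r = p ^ j" using D(1) unfolding perm_span_def by blast
    with \<open>D r \<noteq> 0\<close> D(2) obtain i where "j = Suc i" by (cases j) auto
    with j have "i < n" "r = p ^ Suc i" by simp_all
    then have "int p * D r = 0"
      using restr_perm_span_pow[OF assms(1,2) D] restr_D by metis
    then show False using \<open>D r \<noteq> 0\<close> assms(1) by simp
  qed
  then show "A r = B r" unfolding D_def by simp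
qed

end
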